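(* Let $\mathbf{J}\in\mathbb{R}^{n\times n}$ be a real symmetric matrix with zero diagonal, and let $\alpha,\beta>0$ be such that $\lambda_{\min}(\mathbf{J}+\alpha\mathbf{I})>0$. Let $\{\boldsymbol{x}^{(k)}\}_{k\ge0}$ be the DOCH iterates starting from an arbitrary $\boldsymbol{x}^{(0)}\in\mathbb{R}^n$. Then there exists $\sigma>0$ such that for all $k\ge1$, $$\|\nabla\mathcal{H}(\boldsymbol{x}^{(k)})\|_2\le\sigma\|\boldsymbol{x}^{(k)}-\boldsymbol{x}^{(k-1)}\|_2.$$
   Context: Let $f(\boldsymbol{x})=\frac{\beta}{4}\sum_i x_i^4$, $g(\boldsymbol{x})=\frac12\boldsymbol{x}^\top(\mathbf{J}+\alpha\mathbf{I})\boldsymbol{x}$ and $\mathcal{H}=f-g$. The DOCH iterates are defined by $\boldsymbol{x}^{(k+1)}$ being the minimizer of $F_k(\boldsymbol{x})=f(\boldsymbol{x})-g(\boldsymbol{x}^{(k)})-\nabla g(\boldsymbol{x}^{(k)})^\top(\boldsymbol{x}-\boldsymbol{x}^{(k)})$; explicitly, $\boldsymbol{x}^{(k+1)}=\varphi(\beta^{-1}(\mathbf{J}+\alpha\mathbf{I})\boldsymbol{x}^{(k)})$ with $\varphi$ the componentwise real cube root. *)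

theory Defs
  imports "HOL-Analysis.Analysis"
begin

definition doch_f :: "real \<Rightarrow> real^'n \<Rightarrow> real" where
  "doch_f \<beta> x = \<beta> / 4 * (\<Sum>i\<in>UNIV. (x $ i) ^ 4)"

definition doch_g :: "real^'n^'n \<Rightarrow> real \<Rightarrow> real^'n \<Rightarrow> real" where
  "doch_g J \<alpha> x = (1/2) * (x \<bullet> ((J + \<alpha> *\<^sub>R mat 1) *v x))"

definition doch_H :: "real^'n^'n \<Rightarrow> real \<Rightarrow> real \<Rightarrow> real^'n \<Rightarrow> real" where
  "doch_H J \<alpha> \<beta> x = doch_f \<beta> x - doch_g J \<alpha> x"

text \<open>Componentwise real cube root (root 3 is the odd real root, defined for negatives).\<close>
definition cbrt_vec :: "real^'n \<Rightarrow> real^'n" where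
  "cbrt_vec y = (\<chi> i. root 3 (y $ i))"

primrec doch_iter :: "real^'n^'n \<Rightarrow> real \<Rightarrow> real \<Rightarrow> real^'n \<Rightarrow> nat \<Rightarrow> real^'n" where
  "doch_iter J \<alpha> \<beta> x0 0 = x0"
| "doch_iter J \<alpha> \<beta> x0 (Suc k) =
     cbrt_vec ((1 / \<beta>) *\<^sub>R ((J + \<alpha> *\<^sub>R mat 1) *v doch_iter J \<alpha> \<beta> x0 k))"

definition real_eigenvalues :: "real^'n^'n \<Rightarrow> real set" where
  "real_eigenvalues M = {l. \<exists>v. v \<noteq> 0 \<and> M *v v = l *\<^sub>R v}"

definition lambda_min :: "real^'n^'n \<Rightarrow> real" where
  "lambda_min M = Inf (real_eigenvalues M)"

end

theory Submission
  imports Defs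
begin

text \<open>With \<open>M = J + \<alpha> I\<close> the gradient of \<open>\<H>\<close> at \<open>x\<close> is \<open>\<beta> x\<^sup>3 - M x\<close> (cube taken
  componentwise). The DOCH step says precisely \<open>\<beta> x\<^sub>k\<^sup>3 = M x\<^sub>k\<^sub>-\<^sub>1\<close>, so at an iterate the
  gradient is \<open>M (x\<^sub>k\<^sub>-\<^sub>1 - x\<^sub>k)\<close> and any bound on the operator norm of \<open>M\<close> serves as \<open>\<sigma>\<close>.
  Only the symmetry of \<open>J\<close> (making \<open>M x\<close> the gradient of \<open>g\<close>) and \<open>\<beta> \<noteq> 0\<close> are used.\<close>

lemma has_derivative_doch_f:
  "(doch_f \<beta> has_derivative (\<lambda>h. (\<chi> i. \<beta> * (x $ i) ^ 3) \<bullet> h)) (at x)"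
proof -
  note [derivative_intros] = bounded_linear_imp_has_derivative[OF bounded_linear_vec_nth]
  have "((\<lambda>x. \<beta> / 4 * (\<Sum>i\<in>UNIV. (x $ i) ^ 4)) has_derivative
          (\<lambda>h. \<beta> / 4 * (\<Sum>i\<in>UNIV. 4 * h $ i * (x $ i) ^ 3))) (at x)"
    by (intro derivative_eq_intros) auto
  then show ?thesis
    unfolding doch_f_def inner_vec_def by (simp add: sum_distrib_left algebra_simps)
qed

lemma has_derivative_half_quadratic_form:
  fixes M :: "real^'n^'n"
  assumes "transpose M = M"
  shows "((\<lambda>x. 1 / 2 * (x \<bullet> (M *v x))) has_derivative (\<lambda>h. (M *v x) \<bullet> h)) (at x)"
proof -
  note [derivative_intros] = bounded_linear_imp_has_derivative[OF matrix_vector_mul_bounded_linear]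
  have "((\<lambda>x. 1 / 2 * (x \<bullet> (M *v x))) has_derivative
          (\<lambda>h. 1 / 2 * (x \<bullet> (M *v h) + h \<bullet> (M *v x)))) (at x)"
    by (intro derivative_eq_intros) auto
  moreover have "x \<bullet> (M *v h) = (M *v x) \<bullet> h" for h
    by (metis dot_lmul_matrix vector_transpose_matrix assms)
  ultimately show ?thesis
    by (simp add: inner_commute algebra_simps)
qed

lemma gderiv_doch_H:
  assumes "transpose J = J"
  shows "GDERIV (doch_H J \<alpha> \<beta>) x :> (\<chi> i. \<beta> * (x $ i) ^ 3) - (J + \<alpha> *\<^sub>R mat 1) *v x"
proof -
  let ?M = "J + \<alpha> *\<^sub>R mat 1"
  have "transpose ?M = ?M"
    using assms by (simp add: transpose_def mat_def vec_eq_iff)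
  then have "(doch_H J \<alpha> \<beta> has_derivative (\<lambda>h. (\<chi> i. \<beta> * (x $ i) ^ 3) \<bullet> h - (?M *v x) \<bullet> h)) (at x)"
    unfolding doch_H_def[abs_def] doch_g_def
    by (intro has_derivative_diff has_derivative_doch_f has_derivative_half_quadratic_form)
  then show ?thesis
    unfolding gderiv_def by (simp add: inner_diff_right inner_commute)
qed

lemma cube_doch_iter_Suc:
  assumes "\<beta> \<noteq> 0"
  shows "(\<chi> i. \<beta> * (doch_iter J \<alpha> \<beta> x0 (Suc k) $ i) ^ 3) = (J + \<alpha> *\<^sub>R mat 1) *v doch_iter J \<alpha> \<beta> x0 k"
  using assms by (simp add: cbrt_vec_def odd_real_root_pow vec_eq_iff)

lemma gderiv_doch_H_at_iterate:
  assumes "transpose J = J" and "\<beta> \<noteq> 0"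
  shows "GDERIV (doch_H J \<alpha> \<beta>) (doch_iter J \<alpha> \<beta> x0 (Suc k)) :>
           (J + \<alpha> *\<^sub>R mat 1) *v (doch_iter J \<alpha> \<beta> x0 k - doch_iter J \<alpha> \<beta> x0 (Suc k))"
  using gderiv_doch_H[OF assms(1), of \<alpha> \<beta> "doch_iter J \<alpha> \<beta> x0 (Suc k)"]
  unfolding cube_doch_iter_Suc[OF assms(2)] matrix_vector_mult_diff_distrib .

theorem propositionS9:
  fixes J :: "real^'n^'n" and \<alpha> \<beta> :: real and x0 :: "real^'n"
  assumes "transpose J = J"
    and "\<forall>i. J $ i $ i = 0"
    and "\<alpha> > 0" and "\<beta> > 0"
    and "lambda_min (J + \<alpha> *\<^sub>R mat 1) > 0"
  shows "\<exists>\<sigma>>0. \<forall>k\<ge>1. \<exists>D. (GDERIV (doch_H J \<alpha> \<beta>) (doch_iter J \<alpha> \<beta> x0 k) :> D) \<and>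
           norm D \<le> \<sigma> * norm (doch_iter J \<alpha> \<beta> x0 k - doch_iter J \<alpha> \<beta> x0 (k - 1))"
proof -
  let ?M = "J + \<alpha> *\<^sub>R mat 1"
  let ?x = "doch_iter J \<alpha> \<beta> x0"
  obtain K where "K > 0" and K: "\<And>v. norm (?M *v v) \<le> norm v * K"
    using bounded_linear.pos_bounded[OF matrix_vector_mul_bounded_linear] by blast
  have step: "\<exists>D. (GDERIV (doch_H J \<alpha> \<beta>) (?x (Suc m)) :> D) \<and> norm D \<le> K * norm (?x (Suc m) - ?x m)"
    for m
  proof (intro exI conjI)
    show "GDERIV (doch_H J \<alpha> \<beta>) (?x (Suc m)) :> ?M *v (?x m - ?x (Suc m))"
      using assms(4) by (intro gderiv_doch_H_at_iterate[OF assms(1)]) simp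
    show "norm (?M *v (?x m - ?x (Suc m))) \<le> K * norm (?x (Suc m) - ?x m)"
      using K[of "?x m - ?x (Suc m)"] by (simp add: norm_minus_commute mult.commute)
  qed
  show ?thesis
  proof (intro exI[of _ K] conjI allI impI)
    fix k :: nat
    assume "k \<ge> 1"
    then obtain m where "k = Suc m"
      by (cases k) auto
    with step show "\<exists>D. (GDERIV (doch_H J \<alpha> \<beta>) (?x k) :> D) \<and> norm D \<le> K * norm (?x k - ?x (k - 1))"
      by simp
  qed fact
qed

end
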